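(* In the Karma DPG (with the pay-bid-to-society karma transition), the immediate reward $r[x,a](\mu,\pi)$ and the state transition probability $p[x^+\mid x,a](\mu,\pi)$ are Lipschitz continuous in $s=(\mu,\pi)$ on $\mathcal{M}\times\Pi$. That is, there exist constants $L_r,L_p>0$ such that for all $s,s'\in\mathcal{M}\times\Pi$, $$\sup_{x\in\mathcal{X},\,a\in\mathcal{A}[x]}|r[x,a](s)-r[x,a](s')|\le L_r\|s-s'\|,\qquad \sup_{x,x^+\in\mathcal{X},\,a\in\mathcal{A}[x]}|p[x^+\mid x,a](s)-p[x^+\mid x,a](s')|\le L_p\|s-s'\|.$$
   Context: Karma DPG. Let $\mathcal{U}\subset\mathbb{R}_{>0}$ be a finite set of urgency levels and $K\in\mathbb{N}$. The state space is $\mathcal{X}=\mathcal{U}\times\{0,\dots,K\}$, states written $x=(u,k)$. In state $(u,k)$ the action set is $\mathcal{A}[k]=\{0,1,\dots,k\}$ (bids). $\mathcal{M}=\Delta(\mathcal{X})$ is the set of probability distributions on $\mathcal{X}$ and $\Pi$ is the set of stationary policies $\pi$, i.e. $\pi[\cdot\mid x]\in\Delta(\mathcal{A}[x])$ for every $x$; $\mathcal{M}\times\Pi$ is viewed as a compact subset of a finite-dimensional real vector space equipped with a fixed norm $\|\cdot\|$ (e.g. the sup norm of the concatenated vector). Let $\phi[u^+\mid u]$ be a fixed Markov kernel on $\mathcal{U}$. For bids $a,a'$ let $\mathbb{P}[\texttt{win}\mid a,a']=1$ if $a>a'$, $0$ if $a<a'$, $1/2$ if $a=a'$. Define $\gamma[\texttt{win}\mid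 a](\mu,\pi)=\sum_{(u',k')\in\mathcal{X}}\sum_{a'\in\mathcal{A}[k']}\mu[u',k']\,\pi[a'\mid u',k']\,\mathbb{P}[\texttt{win}\mid a,a']$ and $\gamma[\texttt{lose}\mid a]=1-\gamma[\texttt{win}\mid a]$. Reward: $r[(u,k),a](\mu,\pi)=u\,\gamma[\texttt{win}\mid a](\mu,\pi)$. Pay-bid-to-society karma transition: let $\bar p(\mu,\pi)=\sum_{(u,k)}\mu[u,k]\sum_{a}\pi[a\mid u,k]\,\gamma[\texttt{win}\mid a](\mu,\pi)\,a$, $f^{\text{low}}=\lceil\bar p\rceil-\bar p$, $f^{\text{high}}=1-f^{\text{low}}$. Set $\kappa[k^+\mid k,a,\texttt{win}]=f^{\text{low}}\mathbf 1[k^+=k-a+\lfloor\bar p\rfloor]+f^{\text{high}}\mathbf 1[k^+=k-a+\lceil\bar p\rceil]$, $\kappa[k^+\mid k,a,\texttt{lose}]=f^{\text{low}}\mathbf 1[k^+=k+\lfloor\bar p\rfloor]+f^{\text{high}}\mathbf 1[k^+=k+\lceil\bar p\rceil]$, and $\kappa[k^+\mid k,a](\mu,\pi)=\sum_{o\in\{\texttt{win},\texttt{lose}\}}\gamma[o\mid a](\mu,\pi)\,\kappa[k^+\mid k,a,o](\mu,\pi)$. Transition: $p[(u^+,k^+)\mid (u,k),a](\mu,\pi)=\phi[u^+\mid u]\,\kappa[k^+\mid k,a](\mu,\pi)$. *)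

theory Defs
  imports Complex_Main
begin

text \<open>States x = (u,k) :: real \<times> nat. A population distribution mu :: state \<Rightarrow> real,
 a stationary policy pi :: state \<Rightarrow> nat \<Rightarrow> real (pi x a = probability of bid a in state x).\<close>

type_synonym kstate = "real \<times> nat"

definition states :: "real set \<Rightarrow> nat \<Rightarrow> kstate set" where
  "states U K = U \<times> {0..K}"

definition actions :: "kstate \<Rightarrow> nat set" where
  "actions x = {0..snd x}"

definition is_distr :: "real set \<Rightarrow> nat \<Rightarrow> (kstate \<Rightarrow> real) \<Rightarrow> bool" where
  "is_distr U K mu \<longleftrightarrow> (\<forall>x\<in>states U K. mu x \<ge> 0) \<and> (\<Sum>x\<in>states U K. mu x) = 1"

definition is_policy :: "real set \<Rightarrow> nat \<Rightarrow> (kstate \<Rightarrow> nat \<Rightarrow> real) \<Rightarrow> bool" where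
  "is_policy U K pol \<longleftrightarrow> (\<forall>x\<in>states U K. (\<forall>a\<in>actions x. pol x a \<ge> 0) \<and> (\<Sum>a\<in>actions x. pol x a) = 1)"

definition MPi :: "real set \<Rightarrow> nat \<Rightarrow> ((kstate \<Rightarrow> real) \<times> (kstate \<Rightarrow> nat \<Rightarrow> real)) set" where
  "MPi U K = {(mu, pol). is_distr U K mu \<and> is_policy U K pol}"

definition snorm_dist :: "real set \<Rightarrow> nat \<Rightarrow> (kstate \<Rightarrow> real) \<times> (kstate \<Rightarrow> nat \<Rightarrow> real)
     \<Rightarrow> (kstate \<Rightarrow> real) \<times> (kstate \<Rightarrow> nat \<Rightarrow> real) \<Rightarrow> real" where
  "snorm_dist U K s s' =
     Max (insert 0 ((\<lambda>x. \<bar>fst s x - fst s' x\<bar>) ` states U K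
                  \<union> (\<lambda>(x,a). \<bar>snd s x a - snd s' x a\<bar>) ` (SIGMA x:states U K. actions x)))"

definition win_prob :: "nat \<Rightarrow> nat \<Rightarrow> real" where
  "win_prob a a' = (if a > a' then 1 else if a < a' then 0 else 1/2)"

definition gamma_win :: "real set \<Rightarrow> nat \<Rightarrow> (kstate \<Rightarrow> real) \<times> (kstate \<Rightarrow> nat \<Rightarrow> real) \<Rightarrow> nat \<Rightarrow> real" where
  "gamma_win U K s a =
     (\<Sum>x'\<in>states U K. \<Sum>a'\<in>actions x'. fst s x' * snd s x' a' * win_prob a a')"

definition reward :: "real set \<Rightarrow> nat \<Rightarrow> (kstate \<Rightarrow> real) \<times> (kstate \<Rightarrow> nat \<Rightarrow> real) \<Rightarrow> kstate \<Rightarrow> nat \<Rightarrow> real" where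
  "reward U K s x a = fst x * gamma_win U K s a"

definition pbar :: "real set \<Rightarrow> nat \<Rightarrow> (kstate \<Rightarrow> real) \<times> (kstate \<Rightarrow> nat \<Rightarrow> real) \<Rightarrow> real" where
  "pbar U K s = (\<Sum>x\<in>states U K. fst s x * (\<Sum>a\<in>actions x. snd s x a * gamma_win U K s a * real a))"

definition f_low :: "real set \<Rightarrow> nat \<Rightarrow> (kstate \<Rightarrow> real) \<times> (kstate \<Rightarrow> nat \<Rightarrow> real) \<Rightarrow> real" where
  "f_low U K s = real_of_int \<lceil>pbar U K s\<rceil> - pbar U K s"

definition f_high :: "real set \<Rightarrow> nat \<Rightarrow> (kstate \<Rightarrow> real) \<times> (kstate \<Rightarrow> nat \<Rightarrow> real) \<Rightarrow> real" where
  "f_high U K s = 1 - f_low U K s"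

definition ind :: "bool \<Rightarrow> real" where
  "ind b = (if b then 1 else 0)"

definition kappa_win :: "real set \<Rightarrow> nat \<Rightarrow> (kstate \<Rightarrow> real) \<times> (kstate \<Rightarrow> nat \<Rightarrow> real) \<Rightarrow> nat \<Rightarrow> nat \<Rightarrow> nat \<Rightarrow> real" where
  "kappa_win U K s k a kp =
     f_low U K s * ind (int kp = int k - int a + \<lfloor>pbar U K s\<rfloor>)
   + f_high U K s * ind (int kp = int k - int a + \<lceil>pbar U K s\<rceil>)"

definition kappa_lose :: "real set \<Rightarrow> nat \<Rightarrow> (kstate \<Rightarrow> real) \<times> (kstate \<Rightarrow> nat \<Rightarrow> real) \<Rightarrow> nat \<Rightarrow> nat \<Rightarrow> nat \<Rightarrow> real" where
  "kappa_lose U K s k a kp =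
     f_low U K s * ind (int kp = int k + \<lfloor>pbar U K s\<rfloor>)
   + f_high U K s * ind (int kp = int k + \<lceil>pbar U K s\<rceil>)"

definition kappa :: "real set \<Rightarrow> nat \<Rightarrow> (kstate \<Rightarrow> real) \<times> (kstate \<Rightarrow> nat \<Rightarrow> real) \<Rightarrow> nat \<Rightarrow> nat \<Rightarrow> nat \<Rightarrow> real" where
  "kappa U K s k a kp =
     gamma_win U K s a * kappa_win U K s k a kp + (1 - gamma_win U K s a) * kappa_lose U K s k a kp"

text \<open>phi u u' = phi[u' | u].\<close>
definition trans_prob :: "(real \<Rightarrow> real \<Rightarrow> real) \<Rightarrow> real set \<Rightarrow> nat \<Rightarrow> (kstate \<Rightarrow> real) \<times> (kstate \<Rightarrow> nat \<Rightarrow> real)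
     \<Rightarrow> kstate \<Rightarrow> nat \<Rightarrow> kstate \<Rightarrow> real" where
  "trans_prob phi U K s x a xp = phi (fst x) (fst xp) * kappa U K s (snd x) a (snd xp)"

end

theory Submission
  imports Defs "HOL-Analysis.Lipschitz"
begin

text \<open>Every quantity of the game is obtained from the coordinates of \<open>(\<mu>, \<pi>)\<close>,
which are bounded by 1 on \<open>\<M> \<times> \<Pi>\<close> and 1-Lipschitz for the sup norm, by finitely
many sums and products. The only other ingredient is the rounding of the mean payment \<open>p\<close>
to \<open>\<lfloor>p\<rfloor>\<close> or \<open>\<lceil>p\<rceil>\<close> in the karma transition, but the randomised rounding lands on
\<open>j\<close> with probability \<open>max 0 (1 - \<bar>j - p\<bar>)\<close>, a 1-Lipschitz function of \<open>p\<close>. Bounded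
Lipschitz functions are closed under these operations, and there are only finitely many pairs
\<open>(x, a)\<close> and triples \<open>(x, x\<^sup>+, a)\<close>, so one constant serves for all of them.\<close>

text \<open>The bound is carried along because it is needed for closure under products.\<close>

definition bounded_lipschitz_on :: "'s set \<Rightarrow> ('s \<Rightarrow> 's \<Rightarrow> real) \<Rightarrow> ('s \<Rightarrow> real) \<Rightarrow> bool" where
  "bounded_lipschitz_on S d f \<longleftrightarrow>
     (\<exists>B. \<forall>s\<in>S. \<bar>f s\<bar> \<le> B) \<and> (\<exists>L. \<forall>s\<in>S. \<forall>s'\<in>S. \<bar>f s - f s'\<bar> \<le> L * d s s')"

lemma bounded_lipschitz_onI:
  assumes "\<And>s. s \<in> S \<Longrightarrow> \<bar>f s\<bar> \<le> B"
    and "\<And>s s'. s \<in> S \<Longrightarrow> s' \<in> S \<Longrightarrow> \<bar>f s - f s'\<bar> \<le> L * d s s'"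
  shows "bounded_lipschitz_on S d f"
  using assms unfolding bounded_lipschitz_on_def by blast

lemma bounded_lipschitz_onE:
  assumes "bounded_lipschitz_on S d f"
  obtains B L where "\<And>s. s \<in> S \<Longrightarrow> \<bar>f s\<bar> \<le> B"
    and "\<And>s s'. s \<in> S \<Longrightarrow> s' \<in> S \<Longrightarrow> \<bar>f s - f s'\<bar> \<le> L * d s s'"
  using assms unfolding bounded_lipschitz_on_def by blast

lemma bounded_lipschitz_on_const: "bounded_lipschitz_on S d (\<lambda>_. c)"
  by (rule bounded_lipschitz_onI[where B = "\<bar>c\<bar>" and L = 0]) simp_all

lemma bounded_lipschitz_on_add:
  assumes "bounded_lipschitz_on S d f" "bounded_lipschitz_on S d g"
  shows "bounded_lipschitz_on S d (\<lambda>s. f s + g s)"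
proof -
  obtain Bf Lf where f: "\<And>s. s \<in> S \<Longrightarrow> \<bar>f s\<bar> \<le> Bf"
    "\<And>s s'. s \<in> S \<Longrightarrow> s' \<in> S \<Longrightarrow> \<bar>f s - f s'\<bar> \<le> Lf * d s s'"
    using assms(1) by (metis bounded_lipschitz_onE)
  obtain Bg Lg where g: "\<And>s. s \<in> S \<Longrightarrow> \<bar>g s\<bar> \<le> Bg"
    "\<And>s s'. s \<in> S \<Longrightarrow> s' \<in> S \<Longrightarrow> \<bar>g s - g s'\<bar> \<le> Lg * d s s'"
    using assms(2) by (metis bounded_lipschitz_onE)
  show ?thesis
  proof (rule bounded_lipschitz_onI[where B = "Bf + Bg" and L = "Lf + Lg"])
    show "\<bar>f s + g s\<bar> \<le> Bf + Bg" if "s \<in> S" for s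
      using f(1)[OF that] g(1)[OF that] by linarith
    show "\<bar>f s + g s - (f s' + g s')\<bar> \<le> (Lf + Lg) * d s s'" if "s \<in> S" "s' \<in> S" for s s'
      using f(2)[OF that] g(2)[OF that] by (simp add: distrib_right abs_le_iff)
  qed
qed

lemma bounded_lipschitz_on_mult:
  assumes "bounded_lipschitz_on S d f" "bounded_lipschitz_on S d g"
  shows "bounded_lipschitz_on S d (\<lambda>s. f s * g s)"
proof -
  obtain Bf Lf where f: "\<And>s. s \<in> S \<Longrightarrow> \<bar>f s\<bar> \<le> Bf"
    "\<And>s s'. s \<in> S \<Longrightarrow> s' \<in> S \<Longrightarrow> \<bar>f s - f s'\<bar> \<le> Lf * d s s'"
    using assms(1) by (metis bounded_lipschitz_onE)
  obtain Bg Lg where g: "\<And>s. s \<in> S \<Longrightarrow> \<bar>g s\<bar> \<le> Bg"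
    "\<And>s s'. s \<in> S \<Longrightarrow> s' \<in> S \<Longrightarrow> \<bar>g s - g s'\<bar> \<le> Lg * d s s'"
    using assms(2) by (metis bounded_lipschitz_onE)
  show ?thesis
  proof (rule bounded_lipschitz_onI[where B = "Bf * Bg" and L = "Lf * Bg + Bf * Lg"])
    show "\<bar>f s * g s\<bar> \<le> Bf * Bg" if "s \<in> S" for s
      unfolding abs_mult using f(1)[OF that] g(1)[OF that] by (intro mult_mono) auto
    show "\<bar>f s * g s - f s' * g s'\<bar> \<le> (Lf * Bg + Bf * Lg) * d s s'" if "s \<in> S" "s' \<in> S" for s s'
    proof -
      have "f s * g s - f s' * g s' = (f s - f s') * g s + f s' * (g s - g s')"
        by (simp add: algebra_simps)
      then have "\<bar>f s * g s - f s' * g s'\<bar> \<le> \<bar>f s - f s'\<bar> * \<bar>g s\<bar> + \<bar>f s'\<bar> * \<bar>g s - g s'\<bar>"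
        by (metis abs_mult abs_triangle_ineq)
      also have "\<dots> \<le> (Lf * d s s') * Bg + Bf * (Lg * d s s')"
        using f(1,2) g(1,2) that by (intro add_mono mult_mono) (auto intro: order_trans[OF abs_ge_zero])
      finally show ?thesis by (simp add: algebra_simps)
    qed
  qed
qed

lemma bounded_lipschitz_on_diff:
  assumes "bounded_lipschitz_on S d f" "bounded_lipschitz_on S d g"
  shows "bounded_lipschitz_on S d (\<lambda>s. f s - g s)"
proof -
  have "bounded_lipschitz_on S d (\<lambda>s. f s + (-1) * g s)"
    by (intro bounded_lipschitz_on_add bounded_lipschitz_on_mult bounded_lipschitz_on_const assms)
  then show ?thesis
    by simp
qed

lemma bounded_lipschitz_on_sum:
  assumes "\<And>i. i \<in> I \<Longrightarrow> bounded_lipschitz_on S d (f i)"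
  shows "bounded_lipschitz_on S d (\<lambda>s. \<Sum>i\<in>I. f i s)"
  using assms
  by (induction I rule: infinite_finite_induct)
    (simp_all add: bounded_lipschitz_on_const bounded_lipschitz_on_add)

lemma bounded_lipschitz_on_compose:
  assumes "M-lipschitz_on UNIV g" "bounded_lipschitz_on S d f"
  shows "bounded_lipschitz_on S d (\<lambda>s. g (f s))"
proof -
  obtain B L where f: "\<And>s. s \<in> S \<Longrightarrow> \<bar>f s\<bar> \<le> B"
    "\<And>s s'. s \<in> S \<Longrightarrow> s' \<in> S \<Longrightarrow> \<bar>f s - f s'\<bar> \<le> L * d s s'"
    using assms(2) by (metis bounded_lipschitz_onE)
  have M: "0 \<le> M" "\<And>y y'. \<bar>g y - g y'\<bar> \<le> M * \<bar>y - y'\<bar>"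
    using assms(1) by (auto simp: lipschitz_on_def dist_real_def)
  show ?thesis
  proof (rule bounded_lipschitz_onI[where B = "\<bar>g 0\<bar> + M * B" and L = "M * L"])
    show "\<bar>g (f s)\<bar> \<le> \<bar>g 0\<bar> + M * B" if "s \<in> S" for s
      using M(2)[of "f s" 0] mult_left_mono[OF f(1)[OF that] M(1)] by simp
    show "\<bar>g (f s) - g (f s')\<bar> \<le> M * L * d s s'" if "s \<in> S" "s' \<in> S" for s s'
      using M(2)[of "f s" "f s'"] mult_left_mono[OF f(2)[OF that] M(1)] by (simp add: mult.assoc)
  qed
qed

lemma bounded_lipschitz_on_finite_family:
  assumes "finite I" and "\<And>s s'. s \<in> S \<Longrightarrow> s' \<in> S \<Longrightarrow> 0 \<le> d s s'"
    and "\<And>i. i \<in> I \<Longrightarrow> bounded_lipschitz_on S d (f i)"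
  shows "\<exists>L>0. \<forall>i\<in>I. \<forall>s\<in>S. \<forall>s'\<in>S. \<bar>f i s - f i s'\<bar> \<le> L * d s s'"
proof -
  have "\<forall>i\<in>I. \<exists>L. \<forall>s\<in>S. \<forall>s'\<in>S. \<bar>f i s - f i s'\<bar> \<le> L * d s s'"
    using assms(3) unfolding bounded_lipschitz_on_def by blast
  then obtain L where L: "\<And>i s s'. i \<in> I \<Longrightarrow> s \<in> S \<Longrightarrow> s' \<in> S \<Longrightarrow> \<bar>f i s - f i s'\<bar> \<le> L i * d s s'"
    by metis
  have "\<bar>f i s - f i s'\<bar> \<le> (1 + (\<Sum>i\<in>I. \<bar>L i\<bar>)) * d s s'" if "i \<in> I" "s \<in> S" "s' \<in> S" for i s s'
  proof -
    have "L i \<le> 1 + (\<Sum>i\<in>I. \<bar>L i\<bar>)"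
      using member_le_sum[of i I "\<lambda>i. \<bar>L i\<bar>"] assms(1) that(1) by force
    then show ?thesis
      using L[OF that] mult_right_mono[OF _ assms(2)[OF that(2,3)]] by (meson order_trans)
  qed
  moreover have "0 < 1 + (\<Sum>i\<in>I. \<bar>L i\<bar>)"
    by (simp add: add_pos_nonneg sum_nonneg)
  ultimately show ?thesis
    by blast
qed

definition tent :: "real \<Rightarrow> real" where
  "tent y = max 0 (1 - \<bar>y\<bar>)"

lemma lipschitz_on_tent: "1-lipschitz_on UNIV tent"
  by (rule lipschitz_onI) (auto simp: tent_def dist_real_def max_def abs_if)

lemma floor_ceiling_interpolation_eq_tent:
  fixes j :: int and p :: real
  shows "(of_int \<lceil>p\<rceil> - p) * ind (j = \<lfloor>p\<rfloor>) + (1 - (of_int \<lceil>p\<rceil> - p)) * ind (j = \<lceil>p\<rceil>)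
    = tent (of_int j - p)"
proof (cases "p \<in> \<int>")
  case True
  then obtain n where "p = of_int n"
    by (auto elim: Ints_cases)
  then show ?thesis
    by (auto simp: ind_def tent_def)
next
  case False
  then have ceiling: "\<lceil>p\<rceil> = \<lfloor>p\<rfloor> + 1"
    by (metis Ints_of_int ceiling_altdef)
  have p: "of_int \<lfloor>p\<rfloor> \<le> p" "p < of_int \<lfloor>p\<rfloor> + 1"
    by linarith+
  consider "j = \<lfloor>p\<rfloor>" | "j = \<lfloor>p\<rfloor> + 1" | "j < \<lfloor>p\<rfloor>" | "j > \<lfloor>p\<rfloor> + 1"
    by linarith
  then show ?thesis
  proof cases
    case 1
    then show ?thesis using p by (simp add: ind_def tent_def ceiling max_def; linarith)
  next
    case 2
    then show ?thesis using p by (simp add: ind_def tent_def ceiling max_def; linarith)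
  next
    case 3
    then have "of_int j \<le> p - 1" using p by linarith
    then show ?thesis by (simp add: ind_def tent_def ceiling max_def; linarith)
  next
    case 4
    then have "of_int j \<ge> p + 1" using p by linarith
    then show ?thesis using 4 by (simp add: ind_def tent_def ceiling max_def; linarith)
  qed
qed

lemma kappa_win_eq_tent:
  "kappa_win U K s k a kp = tent (of_int (int kp - int k + int a) - pbar U K s)"
proof -
  have "(int kp = int k - int a + \<lfloor>pbar U K s\<rfloor>) = (int kp - int k + int a = \<lfloor>pbar U K s\<rfloor>)"
    "(int kp = int k - int a + \<lceil>pbar U K s\<rceil>) = (int kp - int k + int a = \<lceil>pbar U K s\<rceil>)"
    by arith+
  then show ?thesis
    unfolding kappa_win_def f_high_def f_low_def by (simp only: floor_ceiling_interpolation_eq_tent)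
qed

lemma kappa_lose_eq_tent:
  "kappa_lose U K s k a kp = tent (of_int (int kp - int k) - pbar U K s)"
proof -
  have "(int kp = int k + \<lfloor>pbar U K s\<rfloor>) = (int kp - int k = \<lfloor>pbar U K s\<rfloor>)"
    "(int kp = int k + \<lceil>pbar U K s\<rceil>) = (int kp - int k = \<lceil>pbar U K s\<rceil>)"
    by arith+
  then show ?thesis
    unfolding kappa_lose_def f_high_def f_low_def by (simp only: floor_ceiling_interpolation_eq_tent)
qed

lemma finite_states: "finite U \<Longrightarrow> finite (states U K)"
  by (simp add: states_def)

lemma finite_actions: "finite (actions x)"
  by (simp add: actions_def)

lemma snorm_dist_nonneg_and_bounds:
  assumes "finite U"
  shows snorm_dist_nonneg: "0 \<le> snorm_dist U K s s'"
    and snorm_dist_ge_distr: "x \<in> states U K \<Longrightarrow> \<bar>fst s x - fst s' x\<bar> \<le> snorm_dist U K s s'"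
    and snorm_dist_ge_policy: "x \<in> states U K \<Longrightarrow> a \<in> actions x \<Longrightarrow>
      \<bar>snd s x a - snd s' x a\<bar> \<le> snorm_dist U K s s'"
proof -
  have "finite (SIGMA x:states U K. actions x)"
    using finite_states[OF assms] by (auto intro: finite_actions)
  then have "finite (insert 0 ((\<lambda>x. \<bar>fst s x - fst s' x\<bar>) ` states U K
      \<union> (\<lambda>(x,a). \<bar>snd s x a - snd s' x a\<bar>) ` (SIGMA x:states U K. actions x)))"
    using finite_states[OF assms] by simp
  then show "0 \<le> snorm_dist U K s s'"
    and "x \<in> states U K \<Longrightarrow> \<bar>fst s x - fst s' x\<bar> \<le> snorm_dist U K s s'"
    and "x \<in> states U K \<Longrightarrow> a \<in> actions x \<Longrightarrow> \<bar>snd s x a - snd s' x a\<bar> \<le> snorm_dist U K s s'"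
    unfolding snorm_dist_def by (auto intro!: Max_ge)
qed

lemma MPi_abs_distr_le_1:
  assumes "finite U" "s \<in> MPi U K" "x \<in> states U K"
  shows "\<bar>fst s x\<bar> \<le> 1"
proof -
  have "is_distr U K (fst s)"
    using assms(2) by (auto simp: MPi_def)
  then show ?thesis
    using member_le_sum[of x "states U K" "fst s"] finite_states[OF assms(1)] assms(3)
    by (auto simp: is_distr_def)
qed

lemma MPi_abs_policy_le_1:
  assumes "s \<in> MPi U K" "x \<in> states U K" "a \<in> actions x"
  shows "\<bar>snd s x a\<bar> \<le> 1"
proof -
  have "is_policy U K (snd s)"
    using assms(1) by (auto simp: MPi_def)
  then show ?thesis
    using member_le_sum[of a "actions x" "snd s x"] finite_actions assms(2,3)
    by (auto simp: is_policy_def)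
qed

lemma bounded_lipschitz_distr:
  assumes "finite U" "x \<in> states U K"
  shows "bounded_lipschitz_on (MPi U K) (snorm_dist U K) (\<lambda>s. fst s x)"
  by (rule bounded_lipschitz_onI[where B = 1 and L = 1])
    (use assms in \<open>auto intro: MPi_abs_distr_le_1 snorm_dist_ge_distr\<close>)

lemma bounded_lipschitz_policy:
  assumes "finite U" "x \<in> states U K" "a \<in> actions x"
  shows "bounded_lipschitz_on (MPi U K) (snorm_dist U K) (\<lambda>s. snd s x a)"
  by (rule bounded_lipschitz_onI[where B = 1 and L = 1])
    (use assms in \<open>auto intro: MPi_abs_policy_le_1 snorm_dist_ge_policy\<close>)

lemma bounded_lipschitz_gamma_win:
  assumes "finite U"
  shows "bounded_lipschitz_on (MPi U K) (snorm_dist U K) (\<lambda>s. gamma_win U K s a)"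
  unfolding gamma_win_def
  by (intro bounded_lipschitz_on_sum bounded_lipschitz_on_mult bounded_lipschitz_on_const
      bounded_lipschitz_distr bounded_lipschitz_policy assms)

lemma bounded_lipschitz_pbar:
  assumes "finite U"
  shows "bounded_lipschitz_on (MPi U K) (snorm_dist U K) (pbar U K)"
  unfolding pbar_def
  by (intro bounded_lipschitz_on_sum bounded_lipschitz_on_mult bounded_lipschitz_on_const
      bounded_lipschitz_distr bounded_lipschitz_policy bounded_lipschitz_gamma_win assms)

lemma bounded_lipschitz_kappa:
  assumes "finite U"
  shows "bounded_lipschitz_on (MPi U K) (snorm_dist U K) (\<lambda>s. kappa U K s k a kp)"
  unfolding kappa_def kappa_win_eq_tent kappa_lose_eq_tent
  by (intro bounded_lipschitz_on_add bounded_lipschitz_on_mult bounded_lipschitz_on_diff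
      bounded_lipschitz_on_const bounded_lipschitz_gamma_win
      bounded_lipschitz_on_compose[OF lipschitz_on_tent] bounded_lipschitz_pbar assms)

lemma bounded_lipschitz_reward:
  assumes "finite U"
  shows "bounded_lipschitz_on (MPi U K) (snorm_dist U K) (\<lambda>s. reward U K s x a)"
  unfolding reward_def
  by (intro bounded_lipschitz_on_mult bounded_lipschitz_on_const bounded_lipschitz_gamma_win assms)

lemma bounded_lipschitz_trans_prob:
  assumes "finite U"
  shows "bounded_lipschitz_on (MPi U K) (snorm_dist U K) (\<lambda>s. trans_prob phi U K s x a xp)"
  unfolding trans_prob_def
  by (intro bounded_lipschitz_on_mult bounded_lipschitz_on_const bounded_lipschitz_kappa assms)

theorem lemma1:
  fixes U :: "real set" and K :: nat and phi :: "real \<Rightarrow> real \<Rightarrow> real"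
  assumes "finite U" and "\<forall>u\<in>U. u > 0"
    and "\<forall>u\<in>U. \<forall>u'\<in>U. phi u u' \<ge> 0" and "\<forall>u\<in>U. (\<Sum>u'\<in>U. phi u u') = 1"
  shows "\<exists>Lr>0. \<exists>Lp>0. \<forall>s\<in>MPi U K. \<forall>s'\<in>MPi U K.
     (\<forall>x\<in>states U K. \<forall>a\<in>actions x.
        \<bar>reward U K s x a - reward U K s' x a\<bar> \<le> Lr * snorm_dist U K s s') \<and>
     (\<forall>x\<in>states U K. \<forall>xp\<in>states U K. \<forall>a\<in>actions x.
        \<bar>trans_prob phi U K s x a xp - trans_prob phi U K s' x a xp\<bar> \<le> Lp * snorm_dist U K s s')"
proof -
  have nonneg: "\<And>s s'. s \<in> MPi U K \<Longrightarrow> s' \<in> MPi U K \<Longrightarrow> 0 \<le> snorm_dist U K s s'"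
    using snorm_dist_nonneg[OF assms(1)] .
  have finite_index: "finite (SIGMA x:states U K. actions x)"
    "finite (SIGMA x:states U K. states U K \<times> actions x)"
    using finite_states[OF assms(1)] finite_actions by auto
  obtain Lr where "Lr > 0" and "\<forall>x\<in>states U K. \<forall>a\<in>actions x. \<forall>s\<in>MPi U K. \<forall>s'\<in>MPi U K.
      \<bar>reward U K s x a - reward U K s' x a\<bar> \<le> Lr * snorm_dist U K s s'"
    using bounded_lipschitz_on_finite_family[where S = "MPi U K" and d = "snorm_dist U K"
        and f = "\<lambda>(x, a) s. reward U K s x a", OF finite_index(1) nonneg]
      bounded_lipschitz_reward[OF assms(1)]
    by auto
  moreover obtain Lp where "Lp > 0" and "\<forall>x\<in>states U K. \<forall>xp\<in>states U K. \<forall>a\<in>actions x.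
      \<forall>s\<in>MPi U K. \<forall>s'\<in>MPi U K.
      \<bar>trans_prob phi U K s x a xp - trans_prob phi U K s' x a xp\<bar> \<le> Lp * snorm_dist U K s s'"
    using bounded_lipschitz_on_finite_family[where S = "MPi U K" and d = "snorm_dist U K"
        and f = "\<lambda>(x, xp, a) s. trans_prob phi U K s x a xp", OF finite_index(2) nonneg]
      bounded_lipschitz_trans_prob[OF assms(1)]
    by auto
  ultimately show ?thesis
    by blast
qed

end
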